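(* Let $G=(V,E)$ be a simple connected undirected graph with $n\ge 2$ vertices, let $S$ be the output of Algorithm Stage-One on $G$, and let $S'=S\setminus V(G(P_S))$. Then $S'$ has a system of distinct representatives in $N(S')\setminus S$; that is, there is an injective map $\varphi:S'\to N(S')\setminus S$ such that $(x,\varphi(x))\in E$ for every $x\in S'$.
   Context: For $v\in V$, $N(v)=\{u\in V:(u,v)\in E\}$; for $U\subseteq V$, $N(U)=\{v\in V\setminus U: v \text{ has a neighbor in } U\}$. Algorithm Stage-One: set $S_0=\emptyset$ and $h=0$. While $S_h$ is not a dominating set of $G$: increase $h$ by one; for each $v\in V\setminus S_{h-1}$ its active degree is $|N(v)\setminus (S_{h-1}\cup N(S_{h-1}))|$; if the maximum active degree over $V\setminus S_{h-1}$ is positive, let $v_h$ be any vertex of $V\setminus S_{h-1}$ of maximum active degree, otherwise let $v_h$ be any vertex of $V\setminus(S_{h-1}\cup N(S_{h-1}))$; set $S_h=S_{h-1}\cup\{v_h\}$. The output is $S=S_p=\{v_1,\dots,v_p\}$. For $h\in\{1,\dots,p\}$, let $S(h)=N(v_h)\setminus(S_{h-1}\cup N(S_{h-1}))$. The set of tied pairs is $P_S=\{(v_h,v): h\in\{1,\dots,p\},\ v\in S\cap S(h)\}$. $G(P_S)$ is the subgraph of $G$ whose edges are the tied pairs and whose vertices are the endpoints of tied pairs; $V(G(P_S))$ is its vertex set. *)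

theory Defs
  imports Main
begin

definition simple_graph :: "'a set \<Rightarrow> ('a \<times> 'a) set \<Rightarrow> bool" where
  "simple_graph V E \<longleftrightarrow> finite V \<and> E \<subseteq> V \<times> V \<and> sym E \<and> irrefl E"

definition connected_graph :: "'a set \<Rightarrow> ('a \<times> 'a) set \<Rightarrow> bool" where
  "connected_graph V E \<longleftrightarrow> (\<forall>u\<in>V. \<forall>v\<in>V. (u, v) \<in> E\<^sup>*)"

definition nbr :: "'a set \<Rightarrow> ('a \<times> 'a) set \<Rightarrow> 'a \<Rightarrow> 'a set" where
  "nbr V E v = {u \<in> V. (u, v) \<in> E}"

definition nbrs :: "'a set \<Rightarrow> ('a \<times> 'a) set \<Rightarrow> 'a set \<Rightarrow> 'a set" where
  "nbrs V E U = {v \<in> V - U. \<exists>u\<in>U. (u, v) \<in> E}"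

definition dominating :: "'a set \<Rightarrow> ('a \<times> 'a) set \<Rightarrow> 'a set \<Rightarrow> bool" where
  "dominating V E D \<longleftrightarrow> D \<subseteq> V \<and> (\<forall>v\<in>V. v \<in> D \<or> (\<exists>u\<in>D. (u, v) \<in> E))"

definition active_degree :: "'a set \<Rightarrow> ('a \<times> 'a) set \<Rightarrow> 'a set \<Rightarrow> 'a \<Rightarrow> nat" where
  "active_degree V E T v = card (nbr V E v - (T \<union> nbrs V E T))"

text \<open>A run of Algorithm Stage-One: the list vs = [v_1,...,v_p] of chosen vertices
(0-indexed: vs!h is v_{h+1}, and set (take h vs) is S_h).  Every legal sequence
of (nondeterministic) choices is a run.\<close>
definition stage_one_run :: "'a set \<Rightarrow> ('a \<times> 'a) set \<Rightarrow> 'a list \<Rightarrow> bool" where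
  "stage_one_run V E vs \<longleftrightarrow>
     (\<forall>h < length vs.
        let T = set (take h vs); v = vs ! h in
        \<not> dominating V E T \<and> v \<in> V - T \<and>
        (if Max (active_degree V E T ` (V - T)) > 0
         then active_degree V E T v = Max (active_degree V E T ` (V - T))
         else v \<in> V - (T \<union> nbrs V E T)))
     \<and> dominating V E (set vs)"

text \<open>S(h) for the (h+1)-th step (0-indexed h).\<close>
definition step_set :: "'a set \<Rightarrow> ('a \<times> 'a) set \<Rightarrow> 'a list \<Rightarrow> nat \<Rightarrow> 'a set" where
  "step_set V E vs h = nbr V E (vs ! h) - (set (take h vs) \<union> nbrs V E (set (take h vs)))"

definition tied_pairs :: "'a set \<Rightarrow> ('a \<times> 'a) set \<Rightarrow> 'a list \<Rightarrow> ('a \<times> 'a) set" where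
  "tied_pairs V E vs = {(vs ! h, v) | h v. h < length vs \<and> v \<in> set vs \<inter> step_set V E vs h}"

text \<open>Vertex set of G(P_S): endpoints of tied pairs.\<close>
definition tied_vertices :: "'a set \<Rightarrow> ('a \<times> 'a) set \<Rightarrow> 'a list \<Rightarrow> 'a set" where
  "tied_vertices V E vs = fst ` tied_pairs V E vs \<union> snd ` tied_pairs V E vs"

end

theory Submission
  imports Defs
begin

text \<open>Since each chosen vertex \<open>v\<^sub>h\<close> has positive active degree, \<open>S(h)\<close> is nonempty, and
  the sets \<open>S(h)\<close> are pairwise disjoint: once \<open>v\<^sub>h\<close> is chosen, its neighbours are dominated.
  A vertex \<open>v\<^sub>h \<in> S'\<close> is untied, so \<open>S(h)\<close> avoids \<open>S\<close>; picking any element of \<open>S(h)\<close>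
  therefore gives an injective choice of private neighbours outside \<open>S\<close>.\<close>

lemma simple_graph_nbr_sym:
  assumes "simple_graph V E" and "u \<in> nbr V E v"
  shows "(v, u) \<in> E" and "u \<in> V"
  using assms unfolding simple_graph_def nbr_def by (auto dest: symD)

lemma connected_graph_has_neighbour:
  assumes "simple_graph V E" and "connected_graph V E" and "card V \<ge> 2" and "w \<in> V"
  obtains u where "(w, u) \<in> E"
proof -
  have "V \<noteq> {w}" using assms(3) by auto
  then obtain v where "v \<in> V" "v \<noteq> w" using assms(4) by blast
  then have "(w, v) \<in> E\<^sup>*" "w \<noteq> v" using assms(2,4) unfolding connected_graph_def by auto
  then show thesis using that by (cases rule: converse_rtranclE) auto
qed

lemma Max_active_degree_pos:
  assumes "simple_graph V E" and "connected_graph V E" and "card V \<ge> 2"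
    and "T \<subseteq> V" and "\<not> dominating V E T"
  shows "Max (active_degree V E T ` (V - T)) > 0"
proof -
  have finV: "finite V" and symE: "sym E" and EV: "E \<subseteq> V \<times> V"
    using assms(1) unfolding simple_graph_def by auto
  obtain w where w: "w \<in> V" "w \<notin> T" "\<forall>u\<in>T. (u, w) \<notin> E"
    using assms(4,5) unfolding dominating_def by auto
  obtain u where wu: "(w, u) \<in> E"
    using connected_graph_has_neighbour[OF assms(1-3) w(1)] .
  have u: "u \<in> V - T"
    using wu w(3) symE EV by (auto dest: symD)
  have "w \<in> nbr V E u - (T \<union> nbrs V E T)"
    using w wu unfolding nbr_def nbrs_def by auto
  moreover have "finite (nbr V E u)" using finV unfolding nbr_def by auto
  ultimately have "active_degree V E T u > 0"
    unfolding active_degree_def by (metis card_gt_0_iff empty_iff finite_Diff)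
  also have "active_degree V E T u \<le> Max (active_degree V E T ` (V - T))"
    using u finV by (intro Max_ge) auto
  finally show ?thesis .
qed

lemma stage_one_run_step_set_nonempty:
  assumes "simple_graph V E" and "connected_graph V E" and "card V \<ge> 2"
    and "stage_one_run V E vs" and "h < length vs"
  shows "step_set V E vs h \<noteq> {}"
proof -
  let ?T = "set (take h vs)"
  have step: "\<not> dominating V E ?T" "vs ! h \<in> V - ?T"
    and choice: "Max (active_degree V E ?T ` (V - ?T)) > 0 \<Longrightarrow>
      active_degree V E ?T (vs ! h) = Max (active_degree V E ?T ` (V - ?T))"
    using assms(4,5) unfolding stage_one_run_def Let_def by auto
  have "?T \<subseteq> V"
    using assms(4) set_take_subset[of h vs] unfolding stage_one_run_def dominating_def by blast
  then have "Max (active_degree V E ?T ` (V - ?T)) > 0"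
    using Max_active_degree_pos[OF assms(1-3)] step(1) by blast
  with choice have "active_degree V E ?T (vs ! h) > 0" by simp
  then show ?thesis
    unfolding active_degree_def step_set_def by (metis card.empty less_irrefl)
qed

lemma step_set_disjoint:
  assumes "simple_graph V E" and "h < k" and "k < length vs"
  shows "step_set V E vs h \<inter> step_set V E vs k = {}"
proof (intro equals0I)
  fix w assume w: "w \<in> step_set V E vs h \<inter> step_set V E vs k"
  have "vs ! h \<in> set (take k vs)" using assms(2,3) by (auto simp: in_set_conv_nth)
  moreover have "(vs ! h, w) \<in> E" "w \<in> V"
    using w simple_graph_nbr_sym[OF assms(1)] unfolding step_set_def by auto
  ultimately have "w \<in> set (take k vs) \<union> nbrs V E (set (take k vs))"
    unfolding nbrs_def by blast
  with w show False unfolding step_set_def by blast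
qed

lemma step_set_of_untied:
  assumes "h < length vs" and "vs ! h \<notin> tied_vertices V E vs"
  shows "step_set V E vs h \<inter> set vs = {}"
proof (intro equals0I)
  fix w assume "w \<in> step_set V E vs h \<inter> set vs"
  with assms(1) have "(vs ! h, w) \<in> tied_pairs V E vs" unfolding tied_pairs_def by blast
  with assms(2) show False unfolding tied_vertices_def by force
qed

theorem claim1:
  fixes V :: "'a set" and E :: "('a \<times> 'a) set" and vs :: "'a list"
  assumes "simple_graph V E" and "connected_graph V E" and "card V \<ge> 2"
    and "stage_one_run V E vs"
  defines "S \<equiv> set vs"
  defines "S' \<equiv> set vs - tied_vertices V E vs"
  shows "\<exists>\<phi>. inj_on \<phi> S' \<and> (\<forall>x\<in>S'. \<phi> x \<in> nbrs V E S' - S \<and> (x, \<phi> x) \<in> E)"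
proof -
  have "\<forall>x\<in>S'. \<exists>w h. h < length vs \<and> vs ! h = x \<and> w \<in> step_set V E vs h - S"
  proof
    fix x assume "x \<in> S'"
    then obtain h where h: "h < length vs" "vs ! h = x" "x \<notin> tied_vertices V E vs"
      unfolding S'_def by (auto simp: in_set_conv_nth)
    then show "\<exists>w h. h < length vs \<and> vs ! h = x \<and> w \<in> step_set V E vs h - S"
      using stage_one_run_step_set_nonempty[OF assms(1-4) h(1)] step_set_of_untied[of h vs V E]
      unfolding S_def by blast
  qed
  then obtain \<phi> idx where \<phi>: "\<And>x. x \<in> S' \<Longrightarrow>
      idx x < length vs \<and> vs ! idx x = x \<and> \<phi> x \<in> step_set V E vs (idx x) - S"
    by metis
  have "inj_on \<phi> S'"
  proof (rule inj_onI)
    fix x y assume "x \<in> S'" "y \<in> S'" "\<phi> x = \<phi> y"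
    with \<phi> step_set_disjoint[OF assms(1)] have "idx x = idx y"
      by (metis disjoint_iff linorder_neqE_nat DiffD1)
    with \<phi> \<open>x \<in> S'\<close> \<open>y \<in> S'\<close> show "x = y" by metis
  qed
  moreover have "\<phi> x \<in> nbrs V E S' - S \<and> (x, \<phi> x) \<in> E" if "x \<in> S'" for x
  proof -
    have "\<phi> x \<in> nbr V E x" "\<phi> x \<notin> S" using \<phi>[OF that] unfolding step_set_def by auto
    then have "(x, \<phi> x) \<in> E" "\<phi> x \<in> V - S'"
      using simple_graph_nbr_sym[OF assms(1)] unfolding S'_def S_def by auto
    with that \<open>\<phi> x \<notin> S\<close> show ?thesis unfolding nbrs_def by blast
  qed
  ultimately show ?thesis by blast
qed

end
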